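(* Let $S>0$, let $D$ be a finite multiset of items with sizes in $(0,S]$, let $k\ge1$ be an integer and $0<\epsilon\le 1/2$. Call an item large if its size exceeds $\epsilon S$ and small otherwise. Suppose the $k$ copies of all large items are packed into $L$ bins forming a valid partial $k$-times bin packing (each bin of total size at most $S$, no bin containing two copies of the same item). Suppose the $k$ copies of the small items are then inserted one at a time, each into some existing bin in which it fits and which contains no copy of the same item, a new bin being opened only when no such bin exists. Then the total number of bins used is at most $\max\{L,(1+2\epsilon)\,OPT(D_k)+k\}$.
   Context: $D_k$ is the collection of $k$ copies of each item of $D$. A $k$-times bin packing of $D$ assigns all copies in $D_k$ to bins such that each bin has total size at most $S$ and no bin contains two copies of the same item; $OPT(D_k)$ is the minimum number of bins in such a packing. *)

theory Defs
  imports Complex_Main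
begin

text \<open>Items are the elements of a finite index set I (so equal sizes are allowed: D is a multiset
of sizes), with size function s. A bin is a set of items (a bin never contains two copies of
the same item, so it is determined by the set of items of which it holds a copy).\<close>

definition kpacking :: "'a set \<Rightarrow> ('a \<Rightarrow> real) \<Rightarrow> real \<Rightarrow> nat \<Rightarrow> 'a set list \<Rightarrow> bool" where
  "kpacking I s S k Bs \<longleftrightarrow>
     (\<forall>B\<in>set Bs. B \<subseteq> I \<and> sum s B \<le> S) \<and>
     (\<forall>i\<in>I. length (filter (\<lambda>B. i \<in> B) Bs) = k)"

definition OPT :: "'a set \<Rightarrow> ('a \<Rightarrow> real) \<Rightarrow> real \<Rightarrow> nat \<Rightarrow> nat" where
  "OPT I s S k = (LEAST m. \<exists>Bs. length Bs = m \<and> kpacking I s S k Bs)"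

inductive insert_step :: "('a \<Rightarrow> real) \<Rightarrow> real \<Rightarrow> 'a set list \<Rightarrow> 'a \<Rightarrow> 'a set list \<Rightarrow> bool" where
  fit: "j < length Bs \<Longrightarrow> x \<notin> Bs ! j \<Longrightarrow> sum s (Bs ! j) + s x \<le> S \<Longrightarrow>
        insert_step s S Bs x (Bs[j := insert x (Bs ! j)])"
| new: "(\<forall>j<length Bs. x \<in> Bs ! j \<or> sum s (Bs ! j) + s x > S) \<Longrightarrow>
        insert_step s S Bs x (Bs @ [{x}])"

inductive insert_seq :: "('a \<Rightarrow> real) \<Rightarrow> real \<Rightarrow> 'a set list \<Rightarrow> 'a list \<Rightarrow> 'a set list \<Rightarrow> bool" where
  Nil: "insert_seq s S Bs [] Bs"
| Cons: "insert_step s S Bs x Bs' \<Longrightarrow> insert_seq s S Bs' xs Bs'' \<Longrightarrow> insert_seq s S Bs (x # xs) Bs''"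

end

theory Submission
  imports Defs
begin

text \<open>Whenever a new bin is opened for a small copy x, every existing bin either holds a copy of x
(at most k - 1 of them, since a copy of x is still pending) or is filled beyond S - s x, which is at
least (1 - \<epsilon>) S. As the total load is at most the volume k \<Sigma> s \<le> OPT S, the number of bins at that
moment is at most k + OPT / (1 - \<epsilon>) \<le> k + (1 + 2\<epsilon>) OPT. If no bin is ever opened, L bins suffice.\<close>

definition copies :: "'a set list \<Rightarrow> 'a \<Rightarrow> nat" where
  "copies Bs i = length (filter (\<lambda>B. i \<in> B) Bs)"

definition holds_k_copies :: "'a set \<Rightarrow> nat \<Rightarrow> 'a set list \<Rightarrow> 'a list \<Rightarrow> bool" where
  "holds_k_copies I k Bs xs \<longleftrightarrow> (\<forall>i. copies Bs i + count_list xs i = (if i \<in> I then k else 0))"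

lemma copies_eq_card: "copies Bs i = card {j. j < length Bs \<and> i \<in> Bs ! j}"
  by (simp add: copies_def length_filter_conv_card)

lemma copies_list_update:
  assumes "j < length Bs"
  shows "copies (Bs[j := B]) i + (if i \<in> Bs ! j then 1 else 0) = copies Bs i + (if i \<in> B then 1 else 0)"
  using assms
proof (induction Bs arbitrary: j)
  case Nil
  then show ?case by simp
next
  case (Cons B' Bs)
  then show ?case by (cases j) (auto simp: copies_def)
qed

lemma copies_insert_step:
  assumes "insert_step s S Bs x Bs'"
  shows "copies Bs' i = copies Bs i + (if i = x then 1 else 0)"
  using assms
proof cases
  case (fit j)
  then show ?thesis using copies_list_update[OF fit(2), of "insert x (Bs ! j)" i] by auto
next
  case new
  then show ?thesis by (simp add: copies_def)
qed

lemma holds_k_copies_insert_step: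
  assumes "insert_step s S Bs x Bs'" and "holds_k_copies I k Bs (x # xs)"
  shows "holds_k_copies I k Bs' xs"
  unfolding holds_k_copies_def
proof
  fix i
  have "copies Bs' i + count_list xs i = copies Bs i + count_list (x # xs) i"
    using copies_insert_step[OF assms(1), of i] by auto
  then show "copies Bs' i + count_list xs i = (if i \<in> I then k else 0)"
    using assms(2) unfolding holds_k_copies_def by presburger
qed

lemma holds_k_copies_bin_subset:
  assumes "holds_k_copies I k Bs xs" and "B \<in> set Bs"
  shows "B \<subseteq> I"
proof
  fix i assume "i \<in> B"
  then have "copies Bs i \<noteq> 0" using assms(2) by (auto simp: copies_def filter_empty_conv)
  then show "i \<in> I" using assms(1) unfolding holds_k_copies_def by (metis add_is_0)
qed

lemma holds_k_copies_copies_le: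
  assumes "holds_k_copies I k Bs xs"
  shows "copies Bs i \<le> k"
proof -
  have "copies Bs i + count_list xs i = (if i \<in> I then k else 0)"
    using assms unfolding holds_k_copies_def by blast
  then show ?thesis
    by (simp split: if_splits)
qed

lemma holds_k_copies_pending_copies_less:
  assumes "holds_k_copies I k Bs xs" and "x \<in> set xs"
  shows "copies Bs x < k"
proof -
  have "copies Bs x + count_list xs x = (if x \<in> I then k else 0)"
    using assms(1) unfolding holds_k_copies_def by blast
  moreover have "count_list xs x \<noteq> 0"
    using assms(2) by (simp add: count_list_0_iff)
  ultimately show ?thesis
    by (simp split: if_splits)
qed

lemma sum_list_load_eq:
  assumes "finite I" and "\<forall>B\<in>set Bs. B \<subseteq> I"
  shows "sum_list (map (sum s) Bs) = (\<Sum>i\<in>I. s i * real (copies Bs i))"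
  using assms(2)
proof (induction Bs)
  case Nil
  then show ?case by (simp add: copies_def)
next
  case (Cons B Bs)
  have "sum s B = (\<Sum>i\<in>I. if i \<in> B then s i else 0)"
    using sum.inter_restrict[OF assms(1), of s B] Cons.prems by (simp add: Int_absorb1)
  with Cons show ?case
    by (simp add: copies_def sum.distrib[symmetric], intro sum.cong) (auto simp: algebra_simps)
qed

lemma holds_k_copies_load_le:
  assumes "holds_k_copies I k Bs xs" and "finite I" and "\<forall>i\<in>I. 0 \<le> s i"
  shows "sum_list (map (sum s) Bs) \<le> real k * sum s I"
proof -
  have "sum_list (map (sum s) Bs) = (\<Sum>i\<in>I. s i * real (copies Bs i))"
    using sum_list_load_eq[OF assms(2)] holds_k_copies_bin_subset[OF assms(1)] by blast
  also have "\<dots> \<le> (\<Sum>i\<in>I. s i * real k)"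
    using holds_k_copies_copies_le[OF assms(1)] assms(3) by (intro sum_mono mult_left_mono) auto
  finally show ?thesis
    by (simp add: sum_distrib_left mult.commute)
qed

lemma kpacking_volume_le:
  assumes "finite I" and "kpacking I s S k Bs"
  shows "real k * sum s I \<le> real (length Bs) * S"
proof -
  have "real k * sum s I = (\<Sum>i\<in>I. s i * real (copies Bs i))"
    using assms(2) by (simp add: kpacking_def copies_def sum_distrib_left mult.commute)
  also have "\<dots> = sum_list (map (sum s) Bs)"
    using sum_list_load_eq[OF assms(1)] assms(2) by (simp add: kpacking_def)
  also have "\<dots> \<le> sum_list (map (\<lambda>_. S) Bs)"
    using assms(2) unfolding kpacking_def by (intro sum_list_mono) auto
  also have "\<dots> = real (length Bs) * S"
    by (simp add: sum_list_triv)
  finally show ?thesis .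
qed

lemma kpacking_singletons:
  assumes "distinct l" and "\<forall>i\<in>set l. s i \<le> S"
  shows "kpacking (set l) s S k (concat (map (\<lambda>i. replicate k {i}) l))"
proof -
  have "length (filter (\<lambda>B. i \<in> B) (concat (map (\<lambda>j. replicate k {j}) l))) = k * count_list l i" for i
    by (induction l) auto
  moreover have "count_list l i = 1" if "i \<in> set l" for i
    using assms(1) that by (induction l) auto
  ultimately show ?thesis
    using assms(2) by (auto simp: kpacking_def)
qed

lemma OPT_attained:
  assumes "finite I" and "\<forall>i\<in>I. s i \<le> S"
  shows "\<exists>Bs. length Bs = OPT I s S k \<and> kpacking I s S k Bs"
proof -
  obtain l where "set l = I" and "distinct l"
    using finite_distinct_list[OF assms(1)] by blast
  then have "kpacking I s S k (concat (map (\<lambda>i. replicate k {i}) l))"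
    using kpacking_singletons assms(2) by blast
  then have "\<exists>m Bs. length Bs = m \<and> kpacking I s S k Bs"
    by blast
  then show ?thesis
    unfolding OPT_def by (rule LeastI_ex)
qed

lemma volume_le_OPT:
  assumes "finite I" and "\<forall>i\<in>I. s i \<le> S"
  shows "real k * sum s I \<le> real (OPT I s S k) * S"
  using OPT_attained[OF assms, of k] kpacking_volume_le[OF assms(1)] by metis

lemma holds_k_copies_kpacking:
  assumes "kpacking J s S k Bs" and "\<forall>i. count_list xs i = (if i \<in> K then k else 0)"
    and "J \<inter> K = {}"
  shows "holds_k_copies (J \<union> K) k Bs xs"
  unfolding holds_k_copies_def
proof
  fix i
  have "copies Bs i = (if i \<in> J then k else 0)"
  proof (cases "i \<in> J")
    case False
    then have "filter (\<lambda>B. i \<in> B) Bs = []"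
      using assms(1) unfolding kpacking_def by (auto simp: filter_empty_conv)
    with False show ?thesis
      by (simp add: copies_def)
  qed (use assms(1) in \<open>simp add: kpacking_def copies_def\<close>)
  then show "copies Bs i + count_list xs i = (if i \<in> J \<union> K then k else 0)"
    using assms(2,3) by auto
qed

lemma new_bin_length_bound:
  assumes full: "\<forall>j<length Bs. x \<in> Bs ! j \<or> sum s (Bs ! j) + s x > S"
    and inv: "holds_k_copies I k Bs (x # xs)"
    and "finite I" and nonneg: "\<forall>i\<in>I. 0 \<le> s i" and "s x \<le> t" and "t < S"
  shows "real (length Bs) + 1 \<le> real k + real k * sum s I / (S - t)"
proof -
  define m where "m = length Bs"
  define J where "J = {j. j < m \<and> x \<notin> Bs ! j}"
  have load_nonneg: "0 \<le> sum s (Bs ! j)" if "j < m" for j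
    using holds_k_copies_bin_subset[OF inv] nonneg that unfolding m_def
    by (meson nth_mem subset_iff sum_nonneg)
  have "J \<union> {j. j < m \<and> x \<in> Bs ! j} = {..<m}"
    unfolding J_def by auto
  then have "card J + copies Bs x = m"
    unfolding copies_eq_card m_def by (subst card_Un_disjoint[symmetric]) (auto simp: J_def)
  moreover have "copies Bs x < k"
    using holds_k_copies_pending_copies_less[OF inv] by simp
  ultimately have "real m + 1 \<le> real k + real (card J)"
    by linarith
  moreover have "real (card J) * (S - t) \<le> real k * sum s I"
  proof -
    have "real (card J) * (S - t) = (\<Sum>j\<in>J. S - t)"
      by simp
    also have "\<dots> \<le> (\<Sum>j\<in>J. sum s (Bs ! j))"
      using full \<open>s x \<le> t\<close> unfolding J_def m_def by (intro sum_mono) force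
    also have "\<dots> \<le> (\<Sum>j<m. sum s (Bs ! j))"
      using load_nonneg by (intro sum_mono2) (auto simp: J_def)
    also have "\<dots> = sum_list (map (sum s) Bs)"
      by (simp add: m_def sum_list_sum_nth atLeast0LessThan)
    also have "\<dots> \<le> real k * sum s I"
      using holds_k_copies_load_le[OF inv \<open>finite I\<close> nonneg] .
    finally show ?thesis .
  qed
  then have "real (card J) \<le> real k * sum s I / (S - t)"
    using \<open>t < S\<close> by (simp add: pos_le_divide_eq)
  ultimately show ?thesis
    unfolding m_def by linarith
qed

lemma insert_seq_length_le:
  assumes "insert_seq s S Bs xs Bs'" and "holds_k_copies I k Bs xs"
    and "finite I" and "\<forall>i\<in>I. 0 \<le> s i" and "\<forall>y\<in>set xs. s y \<le> t" and "t < S"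
  shows "real (length Bs') \<le> max (real (length Bs)) (real k + real k * sum s I / (S - t))"
  using assms
proof (induction rule: insert_seq.induct)
  case (Nil s S Bs)
  then show ?case by simp
next
  case (Cons s S Bs x Bs1 xs Bs2)
  have "real (length Bs1) \<le> max (real (length Bs)) (real k + real k * sum s I / (S - t))"
    using Cons.hyps(1)
  proof cases
    case fit
    then show ?thesis by simp
  next
    case new
    have "s x \<le> t"
      using Cons.prems(4) by simp
    then show ?thesis
      using new_bin_length_bound[OF new(2) Cons.prems(1-3) _ Cons.prems(5)] new(1) by simp
  qed
  moreover have "real (length Bs2) \<le> max (real (length Bs1)) (real k + real k * sum s I / (S - t))"
    using Cons.IH holds_k_copies_insert_step[OF Cons.hyps(1)] Cons.prems by simp
  ultimately show ?case
    by linarith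
qed

lemma divide_one_minus_le:
  fixes \<epsilon> x :: real
  assumes "0 \<le> \<epsilon>" and "\<epsilon> \<le> 1/2" and "0 \<le> x"
  shows "x / (1 - \<epsilon>) \<le> (1 + 2 * \<epsilon>) * x"
proof -
  have "(1 + 2 * \<epsilon>) * (1 - \<epsilon>) = 1 + \<epsilon> * (1 - 2 * \<epsilon>)"
    by (simp add: algebra_simps)
  also have "\<dots> \<ge> 1"
    using assms(1,2) by simp
  finally have "1 \<le> (1 + 2 * \<epsilon>) * (1 - \<epsilon>)" .
  then have "x \<le> (1 + 2 * \<epsilon>) * x * (1 - \<epsilon>)"
    using mult_right_mono[OF _ assms(3)] by (metis mult.commute mult.left_commute mult_1)
  then show ?thesis
    using assms(2) by (simp add: pos_divide_le_eq)
qed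

theorem lemma4:
  fixes I :: "'a set" and s :: "'a \<Rightarrow> real" and S \<epsilon> :: real and k L :: nat
    and Bs0 Bs :: "'a set list" and xs :: "'a list"
  assumes "S > 0" and "finite I" and "\<forall>i\<in>I. 0 < s i \<and> s i \<le> S"
    and "k \<ge> 1" and "0 < \<epsilon>" and "\<epsilon> \<le> 1/2"
    and "length Bs0 = L"
    and "kpacking {i\<in>I. s i > \<epsilon> * S} s S k Bs0"
    and "\<forall>i. count_list xs i = (if i \<in> {i\<in>I. s i \<le> \<epsilon> * S} then k else 0)"
    and "insert_seq s S Bs0 xs Bs"
  shows "real (length Bs) \<le> max (real L) ((1 + 2 * \<epsilon>) * real (OPT I s S k) + real k)"
proof -
  have "{i\<in>I. s i > \<epsilon> * S} \<union> {i\<in>I. s i \<le> \<epsilon> * S} = I"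
    by auto
  then have "holds_k_copies I k Bs0 xs"
    using holds_k_copies_kpacking[OF assms(8,9)] by fastforce
  moreover have "\<forall>y\<in>set xs. s y \<le> \<epsilon> * S"
    using assms(9) by (metis (mono_tags, lifting) count_list_0_iff mem_Collect_eq)
  moreover have "\<epsilon> * S < S"
    using assms(1,6) by simp
  ultimately have "real (length Bs) \<le> max (real L) (real k + real k * sum s I / (S - \<epsilon> * S))"
    using insert_seq_length_le[OF assms(10) _ assms(2)] assms(3,7) by fastforce
  moreover have "real k * sum s I / (S - \<epsilon> * S) = real k * sum s I / S / (1 - \<epsilon>)"
    by (simp add: right_diff_distrib)
  moreover have "real k * sum s I / S \<le> real (OPT I s S k)"
    using volume_le_OPT[OF assms(2), of s S k] assms(1,3) by (simp add: pos_divide_le_eq)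
  then have "real k * sum s I / S / (1 - \<epsilon>) \<le> real (OPT I s S k) / (1 - \<epsilon>)"
    using assms(6) by (intro divide_right_mono) auto
  moreover have "real (OPT I s S k) / (1 - \<epsilon>) \<le> (1 + 2 * \<epsilon>) * real (OPT I s S k)"
    using divide_one_minus_le assms(5,6) by simp
  ultimately show ?thesis
    by linarith
qed

end
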